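(* The weight matrices $W_H$, $W_L$ and $W_J$ are irreducible.
   Context: A weight matrix $W$ of size $N$ is reducible if there is a constant invertible matrix $M$ such that $MW(x)M^*$ is block diagonal with at least two blocks of smaller size for all $x$; otherwise irreducible. Classical scalar weights: Hermite $w_b(x)=e^{-x^2+2bx}$ on $\mathbb R$; Laguerre $w_\alpha(x)=e^{-x}x^\alpha$ on $(0,\infty)$, $\alpha>-1$; Jacobi $w_{\alpha,\beta}(x)=(1-x)^\alpha(1+x)^\beta$ on $(-1,1)$, $\alpha,\beta>-1$. Let $N\ge2$, $A=\sum_{j=1}^{\lfloor N/2\rfloor}a_{2j-1}E_{2j-1,2j}+\sum_{j=1}^{\lfloor (N-1)/2\rfloor}a_{2j}E_{2j+1,2j}$ ($E_{s,t}$ matrix units, all $a_j\in\mathbb R\setminus\{0\}$), $T(x)=I+Ax$. $W_H=T\,\mathrm{diag}(w_{b_1},\dots,w_{b_N})\,T^*$ with $b_i$ pairwise distinct reals; $W_L=T\,\mathrm{diag}(w_{\alpha_1},\dots,w_{\alpha_N})\,T^*$ with $\alpha_i-\alpha_j\notin\mathbb Z$ for $i\ne j$; $W_J=T\,\mathrm{diag}(w_{\alpha_1,\beta_1},\dots,w_{\alpha_N,\beta_N})\,T^*$ with, for $i\ne j$, $\alpha_i-\alpha_j\notin\mathbb Z$ or $\beta_i-\beta_j\notin\mathbb Z$, and $\alpha_1+\beta_1=\alpha_j+\beta_j+1+(-1)^j$ for all $j$. *)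

theory Defs
  imports "Jordan_Normal_Form.Schur_Decomposition"
begin

text \<open>Matrices are N x N Jordan_Normal_Form matrices, indices 0..N-1
  (index i corresponds to index i+1 of the paper).\<close>

definition same_block :: "nat list \<Rightarrow> nat \<Rightarrow> nat \<Rightarrow> bool" where
  "same_block ns i j \<longleftrightarrow> (\<exists>r < length ns.
      sum_list (take r ns) \<le> i \<and> i < sum_list (take (Suc r) ns) \<and>
      sum_list (take r ns) \<le> j \<and> j < sum_list (take (Suc r) ns))"

definition block_diagonal :: "nat list \<Rightarrow> complex mat \<Rightarrow> bool" where
  "block_diagonal ns B \<longleftrightarrow>
     (\<forall>i < dim_row B. \<forall>j < dim_col B. \<not> same_block ns i j \<longrightarrow> B $$ (i, j) = 0)"

definition reducible_weight :: "nat \<Rightarrow> real set \<Rightarrow> (real \<Rightarrow> real mat) \<Rightarrow> bool" where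
  "reducible_weight N S W \<longleftrightarrow>
     (\<exists>M ns. M \<in> carrier_mat N N \<and> invertible_mat M \<and>
        length ns \<ge> 2 \<and> (\<forall>k \<in> set ns. 0 < k) \<and> sum_list ns = N \<and>
        (\<forall>x \<in> S. block_diagonal ns (M * map_mat complex_of_real (W x) * mat_adjoint M)))"

definition irreducible_weight :: "nat \<Rightarrow> real set \<Rightarrow> (real \<Rightarrow> real mat) \<Rightarrow> bool" where
  "irreducible_weight N S W \<longleftrightarrow> \<not> reducible_weight N S W"

text \<open>The matrix A (0-indexed): a_k (paper index k = 1..N-1) sits at paper position (k,k+1)
  for k odd and at (k+1,k) for k even.\<close>
definition A_mat :: "nat \<Rightarrow> (nat \<Rightarrow> real) \<Rightarrow> real mat" where
  "A_mat N a = mat N N (\<lambda>(i, j).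
     if j = i + 1 \<and> even i then a (i + 1)
     else if i = j + 1 \<and> odd j then a i
     else 0)"

definition T_mat :: "nat \<Rightarrow> (nat \<Rightarrow> real) \<Rightarrow> real \<Rightarrow> real mat" where
  "T_mat N a x = 1\<^sub>m N + x \<cdot>\<^sub>m A_mat N a"

definition weight_mat :: "nat \<Rightarrow> (nat \<Rightarrow> real) \<Rightarrow> (nat \<Rightarrow> real \<Rightarrow> real) \<Rightarrow> real \<Rightarrow> real mat" where
  "weight_mat N a w x =
     T_mat N a x * mat N N (\<lambda>(i, j). if i = j then w i x else 0) * transpose_mat (T_mat N a x)"

definition hermite_w :: "real \<Rightarrow> real \<Rightarrow> real" where
  "hermite_w b x = exp (- (x * x) + 2 * b * x)"

definition laguerre_w :: "real \<Rightarrow> real \<Rightarrow> real" where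
  "laguerre_w \<alpha> x = exp (- x) * x powr \<alpha>"

definition jacobi_w :: "real \<Rightarrow> real \<Rightarrow> real \<Rightarrow> real" where
  "jacobi_w \<alpha> \<beta> x = (1 - x) powr \<alpha> * (1 + x) powr \<beta>"

end

(*
  Suppose M W M\<^sup>* is block diagonal.  The projection P onto the first block commutes with it, so
  Q = M\<^sup>-\<^sup>1 P M is a non-scalar matrix with Q W(x) = W(x) Q\<^sup>* for all x.  Writing
  W = T D T\<^sup>T with T(x) = I + x A, every entry of Q W - W Q\<^sup>* is a sum \<Sum>\<^sub>k w\<^sub>k(x) c\<^sub>k(x) with
  polynomials c\<^sub>k of degree at most 2.  If the scalar weights w\<^sub>k are linearly independent over the
  polynomials, all c\<^sub>k vanish; this forces Q to be diagonal with A\<^sub>i\<^sub>j (Q\<^sub>i\<^sub>i - Q\<^sub>j\<^sub>j) = 0, and since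
  every a\<^sub>k is nonzero, A links each index i to i + 1, so Q is scalar.

  Polynomial independence is a dominant-term argument.  For Hermite weights, at +\<infinity> the term with
  the largest b\<^sub>k wins.  For Laguerre weights near 0, and for Jacobi weights near 1, the term with
  the smallest exponent \<alpha>\<^sub>k + ord p\<^sub>k wins; these exponents are distinct because the \<alpha>\<^sub>k are
  pairwise incongruent modulo \<int> (for Jacobi weights this follows from the condition on the
  sums \<alpha>\<^sub>j + \<beta>\<^sub>j).
*)

theory Submission
  imports Defs "HOL-Real_Asymp.Real_Asymp"
begin

section \<open>A reducible weight has a non-scalar intertwiner\<close>

lemma dim_mat_adjoint [simp]:
  "dim_row (mat_adjoint A) = dim_col A" "dim_col (mat_adjoint A) = dim_row A"
  unfolding mat_adjoint_def by auto

lemma mat_adjoint_carrier: "A \<in> carrier_mat n m \<Longrightarrow> mat_adjoint A \<in> carrier_mat m n"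
  by auto

lemma index_mat_adjoint [simp]:
  "i < dim_col A \<Longrightarrow> j < dim_row A \<Longrightarrow> mat_adjoint (A :: complex mat) $$ (i, j) = cnj (A $$ (j, i))"
  unfolding mat_adjoint_def by (simp add: mat_of_rows_index)

lemma index_mult_mat_sum:
  "A \<in> carrier_mat n m \<Longrightarrow> B \<in> carrier_mat m p \<Longrightarrow> i < n \<Longrightarrow> j < p \<Longrightarrow>
   (A * B) $$ (i, j) = (\<Sum>k<m. A $$ (i, k) * B $$ (k, j))"
  by (simp add: scalar_prod_def lessThan_atLeast0)

lemma mat_adjoint_mult:
  fixes A B :: "complex mat"
  assumes A: "A \<in> carrier_mat n m" and B: "B \<in> carrier_mat m p"
  shows "mat_adjoint (A * B) = mat_adjoint B * mat_adjoint A"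
proof (rule eq_matI)
  fix i j assume "i < dim_row (mat_adjoint B * mat_adjoint A)" "j < dim_col (mat_adjoint B * mat_adjoint A)"
  then have ij: "i < p" "j < n" using A B by auto
  have "mat_adjoint (A * B) $$ (i, j) = cnj ((A * B) $$ (j, i))"
    using A B ij by simp
  also have "\<dots> = cnj (\<Sum>k<m. A $$ (j, k) * B $$ (k, i))"
    unfolding index_mult_mat_sum[OF A B ij(2,1)] ..
  also have "\<dots> = (\<Sum>k<m. mat_adjoint B $$ (i, k) * mat_adjoint A $$ (k, j))"
    using A B ij by (simp add: mult.commute)
  also have "\<dots> = (mat_adjoint B * mat_adjoint A) $$ (i, j)"
    using index_mult_mat_sum[OF mat_adjoint_carrier[OF B] mat_adjoint_carrier[OF A] ij] by simp
  finally show "mat_adjoint (A * B) $$ (i, j) = (mat_adjoint B * mat_adjoint A) $$ (i, j)" .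
qed (use A B in simp_all)

lemma mat_adjoint_one [simp]: "mat_adjoint (1\<^sub>m n :: complex mat) = 1\<^sub>m n"
  by (rule eq_matI) simp_all

lemma index_mult_mat_row_diagonal:
  assumes Q: "Q \<in> carrier_mat N N" and B: "B \<in> carrier_mat N N" and ik: "i < N" "k < N"
    and zero: "\<And>l. l < N \<Longrightarrow> l \<noteq> i \<Longrightarrow> Q $$ (i, l) = 0"
  shows "(Q * B) $$ (i, k) = Q $$ (i, i) * B $$ (i, k)"
proof -
  have "(Q * B) $$ (i, k) = (\<Sum>l<N. Q $$ (i, l) * B $$ (l, k))"
    by (rule index_mult_mat_sum[OF Q B ik])
  also have "\<dots> = (\<Sum>l<N. if l = i then Q $$ (i, i) * B $$ (i, k) else 0)"
    using zero by (intro sum.cong) auto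
  finally show ?thesis
    using ik by simp
qed

lemma eq_smult_one_matI:
  fixes Q :: "'a :: semiring_1 mat"
  assumes "Q \<in> carrier_mat N N"
    and "\<And>i j. i < N \<Longrightarrow> j < N \<Longrightarrow> i \<noteq> j \<Longrightarrow> Q $$ (i, j) = 0"
    and "\<And>i. i < N \<Longrightarrow> Q $$ (i, i) = c"
  shows "Q = c \<cdot>\<^sub>m 1\<^sub>m N"
proof (rule eq_matI)
  fix i j assume "i < dim_row (c \<cdot>\<^sub>m 1\<^sub>m N)" "j < dim_col (c \<cdot>\<^sub>m 1\<^sub>m N)"
  with assms(2)[of i j] assms(3)[of i] show "Q $$ (i, j) = (c \<cdot>\<^sub>m 1\<^sub>m N) $$ (i, j)"
    by (cases "i = j") simp_all
qed (use assms(1) in simp_all)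

definition leading_projection :: "nat \<Rightarrow> nat \<Rightarrow> complex mat" where
  "leading_projection N n = mat N N (\<lambda>(i, j). if i = j \<and> i < n then 1 else 0)"

lemma dim_leading_projection [simp]:
  "dim_row (leading_projection N n) = N" "dim_col (leading_projection N n) = N"
  by (simp_all add: leading_projection_def)

lemma leading_projection_carrier [simp]: "leading_projection N n \<in> carrier_mat N N"
  by (simp add: leading_projection_def)

lemma mat_adjoint_leading_projection [simp]:
  "mat_adjoint (leading_projection N n) = leading_projection N n"
  by (rule eq_matI) (simp_all add: leading_projection_def)

lemma index_leading_projection_mult:
  assumes B: "B \<in> carrier_mat N N" and ij: "i < N" "j < N"
  shows "(leading_projection N n * B) $$ (i, j) = (if i < n then B $$ (i, j) else 0)"
    and "(B * leading_projection N n) $$ (i, j) = (if j < n then B $$ (i, j) else 0)"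
proof -
  have "(leading_projection N n * B) $$ (i, j) = (\<Sum>k<N. if k = i then (if i < n then B $$ (i, j) else 0) else 0)"
    unfolding index_mult_mat_sum[OF leading_projection_carrier B ij]
    using ij by (intro sum.cong) (auto simp: leading_projection_def)
  then show "(leading_projection N n * B) $$ (i, j) = (if i < n then B $$ (i, j) else 0)"
    using ij by simp
  have "(B * leading_projection N n) $$ (i, j) = (\<Sum>k<N. if k = j then (if j < n then B $$ (i, j) else 0) else 0)"
    unfolding index_mult_mat_sum[OF B leading_projection_carrier ij]
    using ij by (intro sum.cong) (auto simp: leading_projection_def)
  then show "(B * leading_projection N n) $$ (i, j) = (if j < n then B $$ (i, j) else 0)"
    using ij by simp
qed

lemma same_block_Cons_less_iff:
  assumes "same_block (n # ns) i j"
  shows "i < n \<longleftrightarrow> j < n"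
proof -
  obtain r where "sum_list (take r (n # ns)) \<le> i" "i < sum_list (take (Suc r) (n # ns))"
    "sum_list (take r (n # ns)) \<le> j" "j < sum_list (take (Suc r) (n # ns))"
    using assms unfolding same_block_def by blast
  then show ?thesis
    by (cases r) auto
qed

lemma leading_projection_commute_block_diagonal:
  assumes B: "B \<in> carrier_mat N N" and "block_diagonal (n # ns) B"
  shows "leading_projection N n * B = B * leading_projection N n"
proof (rule eq_matI)
  fix i j assume "i < dim_row (B * leading_projection N n)" "j < dim_col (B * leading_projection N n)"
  then have ij: "i < N" "j < N" using B by simp_all
  have "B $$ (i, j) = 0" if "\<not> (i < n \<longleftrightarrow> j < n)"
    using assms ij that same_block_Cons_less_iff unfolding block_diagonal_def by fastforce
  then show "(leading_projection N n * B) $$ (i, j) = (B * leading_projection N n) $$ (i, j)"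
    using index_leading_projection_mult[OF B ij] by auto
qed (use B in simp_all)

lemma invertible_mat_obtain_inverse:
  assumes M: "M \<in> carrier_mat N N" and "invertible_mat M"
  obtains M' where "M' \<in> carrier_mat N N" and "M * M' = 1\<^sub>m N" and "M' * M = 1\<^sub>m N"
proof -
  obtain M' where MM': "M * M' = 1\<^sub>m N" and M'M: "M' * M = 1\<^sub>m (dim_row M')"
    using assms unfolding invertible_mat_def inverts_mat_def by auto
  have "dim_row M' = N"
    using arg_cong[OF M'M, of dim_col] M by simp
  moreover have "dim_col M' = N"
    using arg_cong[OF MM', of dim_col] M by simp
  ultimately show thesis
    using that MM' M'M by blast
qed

lemma conjugated_self_adjoint_intertwines:
  fixes M M' P W :: "complex mat"
  assumes M: "M \<in> carrier_mat N N" and M': "M' \<in> carrier_mat N N" and M'M: "M' * M = 1\<^sub>m N"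
    and P: "P \<in> carrier_mat N N" and "mat_adjoint P = P" and W: "W \<in> carrier_mat N N"
    and commute: "P * (M * W * mat_adjoint M) = (M * W * mat_adjoint M) * P"
  shows "(M' * P * M) * W = W * mat_adjoint (M' * P * M)"
proof -
  define B where "B = M * W * mat_adjoint M"
  have MhC: "mat_adjoint M \<in> carrier_mat N N" and M'hC: "mat_adjoint M' \<in> carrier_mat N N"
    using M M' by (simp_all add: mat_adjoint_carrier)
  have adjoint: "mat_adjoint (M' * P * M) = mat_adjoint M * (P * mat_adjoint M')"
    using mat_adjoint_mult[of "M' * P" N N M N] mat_adjoint_mult[OF M' P] M M' P
      \<open>mat_adjoint P = P\<close> by simp
  have adjoint_inverse: "mat_adjoint M * mat_adjoint M' = 1\<^sub>m N"
    using mat_adjoint_mult[OF M' M] M'M by simp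
  have "(M' * P * M) * W = M' * (P * (M * W)) * (mat_adjoint M * mat_adjoint M')"
    unfolding adjoint_inverse using M M' P W by (simp add: assoc_mult_mat[of _ N N _ N _ N])
  also have "\<dots> = M' * ((P * B) * mat_adjoint M')"
    unfolding B_def using M M' P W MhC M'hC by (simp add: assoc_mult_mat[of _ N N _ N _ N])
  also have "\<dots> = M' * ((B * P) * mat_adjoint M')"
    using commute unfolding B_def by simp
  also have "\<dots> = (M' * M) * W * (mat_adjoint M * (P * mat_adjoint M'))"
    unfolding B_def using M M' P W MhC M'hC by (simp add: assoc_mult_mat[of _ N N _ N _ N])
  also have "\<dots> = W * mat_adjoint (M' * P * M)"
    unfolding adjoint M'M using W by simp
  finally show ?thesis .
qed

lemma conjugate_smult_one_mat:
  fixes M M' P :: "'a :: comm_ring_1 mat"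
  assumes M: "M \<in> carrier_mat N N" and M': "M' \<in> carrier_mat N N" and MM': "M * M' = 1\<^sub>m N"
    and P: "P \<in> carrier_mat N N" and "M' * P * M = d \<cdot>\<^sub>m 1\<^sub>m N"
  shows "P = d \<cdot>\<^sub>m 1\<^sub>m N"
proof -
  have "P = (M * M') * P * (M * M')"
    using P by (simp add: MM')
  also have "\<dots> = M * (M' * P * M) * M'"
    using M M' P by (simp add: assoc_mult_mat[of _ N N _ N _ N])
  also have "\<dots> = d \<cdot>\<^sub>m 1\<^sub>m N"
    unfolding \<open>M' * P * M = d \<cdot>\<^sub>m 1\<^sub>m N\<close>
    using M M' mult_smult_distrib[OF M one_carrier_mat, of d] mult_smult_assoc_mat[OF M M', of d]
    by (simp add: MM')
  finally show ?thesis .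
qed

lemma reducible_weight_obtain_intertwiner:
  fixes W :: "real \<Rightarrow> real mat"
  assumes "reducible_weight N S W" and W: "\<And>x. W x \<in> carrier_mat N N"
  obtains Q where "Q \<in> carrier_mat N N"
    and "\<forall>x \<in> S. Q * map_mat complex_of_real (W x) = map_mat complex_of_real (W x) * mat_adjoint Q"
    and "\<nexists>d. Q = d \<cdot>\<^sub>m 1\<^sub>m N"
proof -
  obtain M ns where M: "M \<in> carrier_mat N N" and "invertible_mat M" and "length ns \<ge> 2"
    and "\<forall>k \<in> set ns. 0 < k" and "sum_list ns = N"
    and block: "\<forall>x \<in> S. block_diagonal ns (M * map_mat complex_of_real (W x) * mat_adjoint M)"
    using assms(1) unfolding reducible_weight_def by blast
  moreover obtain n0 n1 rest where ns: "ns = n0 # n1 # rest"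
    using \<open>length ns \<ge> 2\<close> by (metis Suc_le_length_iff numeral_2_eq_2)
  ultimately have "0 < n0" and "n0 < N"
    by auto
  obtain M' where M': "M' \<in> carrier_mat N N" and MM': "M * M' = 1\<^sub>m N" and M'M: "M' * M = 1\<^sub>m N"
    using invertible_mat_obtain_inverse[OF M \<open>invertible_mat M\<close>] .
  define P where "P = leading_projection N n0"
  have P: "P \<in> carrier_mat N N" and "mat_adjoint P = P"
    unfolding P_def by simp_all
  show thesis
  proof
    show "M' * P * M \<in> carrier_mat N N"
      using M M' P by simp
    show "\<forall>x \<in> S. (M' * P * M) * map_mat complex_of_real (W x) =
        map_mat complex_of_real (W x) * mat_adjoint (M' * P * M)"
    proof
      fix x assume "x \<in> S"
      have "M * map_mat complex_of_real (W x) * mat_adjoint M \<in> carrier_mat N N"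
        using M W[of x] mat_adjoint_carrier[OF M] by simp
      then have "P * (M * map_mat complex_of_real (W x) * mat_adjoint M) =
          (M * map_mat complex_of_real (W x) * mat_adjoint M) * P"
        using leading_projection_commute_block_diagonal block \<open>x \<in> S\<close> unfolding P_def ns by blast
      then show "(M' * P * M) * map_mat complex_of_real (W x) =
          map_mat complex_of_real (W x) * mat_adjoint (M' * P * M)"
        using W[of x] by (intro conjugated_self_adjoint_intertwines[OF M M' M'M P \<open>mat_adjoint P = P\<close>]) simp_all
    qed
    show "\<nexists>d. M' * P * M = d \<cdot>\<^sub>m 1\<^sub>m N"
    proof
      assume "\<exists>d. M' * P * M = d \<cdot>\<^sub>m 1\<^sub>m N"
      then obtain d where "P = d \<cdot>\<^sub>m 1\<^sub>m N"
        using conjugate_smult_one_mat[OF M M' MM' P] by blast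
      then have "P $$ (0, 0) = P $$ (N - 1, N - 1)"
        using \<open>n0 < N\<close> by simp
      then show False
        using \<open>0 < n0\<close> \<open>n0 < N\<close> by (simp add: P_def leading_projection_def split: if_splits)
    qed
  qed
qed

section \<open>Intertwiners of the weight matrices are scalar\<close>

lemma index_congruence_diagonal:
  fixes T :: "'a :: comm_semiring_1 mat"
  assumes T: "T \<in> carrier_mat N N" and ij: "i < N" "j < N"
  shows "(T * mat N N (\<lambda>(k, l). if k = l then d k else 0) * transpose_mat T) $$ (i, j) =
    (\<Sum>k<N. T $$ (i, k) * d k * T $$ (j, k))"
proof -
  define D where "D = mat N N (\<lambda>(k, l). if k = l then d k else 0)"
  have D: "D \<in> carrier_mat N N" and TD: "T * D \<in> carrier_mat N N"
    unfolding D_def using T by simp_all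
  have TD_index: "(T * D) $$ (i, k) = T $$ (i, k) * d k" if "k < N" for k
  proof -
    have "(T * D) $$ (i, k) = (\<Sum>m<N. T $$ (i, m) * D $$ (m, k))"
      by (rule index_mult_mat_sum[OF T D ij(1) that])
    also have "\<dots> = (\<Sum>m<N. if m = k then T $$ (i, m) * d m else 0)"
      unfolding D_def using that by (intro sum.cong) auto
    finally show ?thesis using that by simp
  qed
  have "(T * D * transpose_mat T) $$ (i, j) = (\<Sum>k<N. (T * D) $$ (i, k) * transpose_mat T $$ (k, j))"
    using index_mult_mat_sum[OF TD _ ij] T by simp
  also have "\<dots> = (\<Sum>k<N. T $$ (i, k) * d k * T $$ (j, k))"
    using TD_index ij T by (intro sum.cong) auto
  finally show ?thesis unfolding D_def .
qed

lemma congruence_intertwining_defect: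
  fixes Q :: "complex mat" and T :: "real mat" and d :: "nat \<Rightarrow> real"
  assumes Q: "Q \<in> carrier_mat N N" and T: "T \<in> carrier_mat N N" and ij: "i < N" "j < N"
  defines "W \<equiv> map_mat complex_of_real (T * mat N N (\<lambda>(k, l). if k = l then d k else 0) * transpose_mat T)"
    and "U \<equiv> Q * map_mat complex_of_real T"
  shows "(Q * W) $$ (i, j) - (W * mat_adjoint Q) $$ (i, j) =
    (\<Sum>k<N. of_real (d k) * (U $$ (i, k) * of_real (T $$ (j, k)) - of_real (T $$ (i, k)) * cnj (U $$ (j, k))))"
proof -
  have W: "W \<in> carrier_mat N N"
    unfolding W_def using T by (simp add: mult_carrier_mat[of _ N N _ N])
  have W_index: "W $$ (l, m) = (\<Sum>k<N. of_real (T $$ (l, k) * d k * T $$ (m, k)))" if "l < N" "m < N" for l m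
    using index_congruence_diagonal[OF T that] that T by (simp add: W_def)
  have U_index: "U $$ (l, k) = (\<Sum>m<N. Q $$ (l, m) * of_real (T $$ (m, k)))" if "l < N" "k < N" for l k
    unfolding U_def using index_mult_mat_sum[OF Q _ that, of "map_mat complex_of_real T"] T that by simp
  have "(Q * W) $$ (i, j) = (\<Sum>m<N. \<Sum>k<N. Q $$ (i, m) * of_real (T $$ (m, k) * d k * T $$ (j, k)))"
    unfolding index_mult_mat_sum[OF Q W ij] using ij by (simp add: W_index sum_distrib_left)
  also have "\<dots> = (\<Sum>k<N. of_real (d k) * (U $$ (i, k) * of_real (T $$ (j, k))))"
    by (subst sum.swap) (simp add: U_index ij sum_distrib_left sum_distrib_right mult_ac)
  finally have left: "(Q * W) $$ (i, j) = \<dots>" .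
  have "(W * mat_adjoint Q) $$ (i, j) = (\<Sum>m<N. \<Sum>k<N. of_real (T $$ (i, k) * d k * T $$ (m, k)) * cnj (Q $$ (j, m)))"
    unfolding index_mult_mat_sum[OF W mat_adjoint_carrier[OF Q] ij] using ij Q
    by (simp add: W_index sum_distrib_right)
  also have "\<dots> = (\<Sum>k<N. of_real (d k) * (of_real (T $$ (i, k)) * cnj (U $$ (j, k))))"
    by (subst sum.swap) (simp add: U_index ij sum_distrib_left sum_distrib_right mult_ac)
  finally have right: "(W * mat_adjoint Q) $$ (i, j) = \<dots>" .
  show ?thesis
    unfolding left right by (simp add: sum_subtractf right_diff_distrib)
qed

lemma dim_A_mat [simp]: "dim_row (A_mat N a) = N" "dim_col (A_mat N a) = N"
  unfolding A_mat_def by simp_all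

lemma A_mat_carrier [simp]: "A_mat N a \<in> carrier_mat N N"
  unfolding carrier_mat_def by simp

lemma dim_T_mat [simp]: "dim_row (T_mat N a x) = N" "dim_col (T_mat N a x) = N"
  unfolding T_mat_def by simp_all

lemma T_mat_carrier [simp]: "T_mat N a x \<in> carrier_mat N N"
  unfolding carrier_mat_def by simp

lemma A_mat_diagonal [simp]: "j < N \<Longrightarrow> A_mat N a $$ (j, j) = 0"
  unfolding A_mat_def by simp

lemma index_T_mat:
  "i < N \<Longrightarrow> j < N \<Longrightarrow> T_mat N a x $$ (i, j) = of_bool (i = j) + x * A_mat N a $$ (i, j)"
  unfolding T_mat_def by simp

lemma index_mult_T_mat:
  fixes Q :: "complex mat"
  assumes Q: "Q \<in> carrier_mat N N" and ik: "i < N" "k < N"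
  shows "(Q * map_mat complex_of_real (T_mat N a x)) $$ (i, k) =
    Q $$ (i, k) + of_real x * (Q * map_mat complex_of_real (A_mat N a)) $$ (i, k)"
proof -
  have "(Q * map_mat complex_of_real (T_mat N a x)) $$ (i, k) =
      (\<Sum>l<N. Q $$ (i, l) * map_mat complex_of_real (T_mat N a x) $$ (l, k))"
    using Q ik by (intro index_mult_mat_sum) simp_all
  also have "\<dots> = (\<Sum>l<N. (if l = k then Q $$ (i, l) else 0) +
      of_real x * (Q $$ (i, l) * map_mat complex_of_real (A_mat N a) $$ (l, k)))"
    using ik by (intro sum.cong) (auto simp: index_T_mat algebra_simps)
  also have "\<dots> = Q $$ (i, k) + of_real x * (Q * map_mat complex_of_real (A_mat N a)) $$ (i, k)"
    using Q ik by (simp add: sum.distrib sum_distrib_left index_mult_mat_sum[of _ N N _ N] del: index_mult_mat)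
  finally show ?thesis .
qed

lemma weight_mat_carrier: "weight_mat N a w x \<in> carrier_mat N N"
  unfolding weight_mat_def by (simp add: mult_carrier_mat[of _ N N _ N])

definition poly_independent_on :: "real set \<Rightarrow> nat \<Rightarrow> (nat \<Rightarrow> real \<Rightarrow> real) \<Rightarrow> bool" where
  "poly_independent_on S N w \<longleftrightarrow>
     (\<forall>p. (\<forall>x \<in> S. (\<Sum>k<N. w k x * poly (p k) x) = 0) \<longrightarrow> (\<forall>k<N. p k = 0))"

lemma poly_independent_onI:
  "(\<And>p k. \<forall>x \<in> S. (\<Sum>k<N. w k x * poly (p k) x) = 0 \<Longrightarrow> k < N \<Longrightarrow> p k = 0) \<Longrightarrow>
   poly_independent_on S N w"
  unfolding poly_independent_on_def by blast

lemma poly_independent_onD: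
  "poly_independent_on S N w \<Longrightarrow> (\<And>x. x \<in> S \<Longrightarrow> (\<Sum>k<N. w k x * poly (p k) x) = 0) \<Longrightarrow>
   k < N \<Longrightarrow> p k = 0"
  unfolding poly_independent_on_def by blast

lemma poly_independent_onD_quadratic:
  fixes c0 c1 c2 :: "nat \<Rightarrow> complex"
  assumes indep: "poly_independent_on S N w"
    and zero: "\<And>x. x \<in> S \<Longrightarrow>
      (\<Sum>k<N. of_real (w k x) * (c0 k + of_real x * c1 k + of_real x ^ 2 * c2 k)) = 0"
    and "k < N"
  shows "c0 k = 0 \<and> c1 k = 0 \<and> c2 k = 0"
proof -
  have "[:Re (c0 k), Re (c1 k), Re (c2 k):] = 0"
  proof (rule poly_independent_onD[OF indep _ \<open>k < N\<close>])
    fix x assume "x \<in> S"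
    from arg_cong[OF zero[OF this], of Re]
    show "(\<Sum>k<N. w k x * poly [:Re (c0 k), Re (c1 k), Re (c2 k):] x) = 0"
      by (simp add: Re_sum power2_eq_square algebra_simps)
  qed
  moreover have "[:Im (c0 k), Im (c1 k), Im (c2 k):] = 0"
  proof (rule poly_independent_onD[OF indep _ \<open>k < N\<close>])
    fix x assume "x \<in> S"
    from arg_cong[OF zero[OF this], of Im]
    show "(\<Sum>k<N. w k x * poly [:Im (c0 k), Im (c1 k), Im (c2 k):] x) = 0"
      by (simp add: Im_sum power2_eq_square algebra_simps)
  qed
  ultimately show ?thesis
    by (simp add: complex_eq_iff)
qed

text \<open>The two identities say that the constant and the linear coefficient in \<open>x\<close> of the \<open>k\<close>-th
  summand of \<open>(Q W(x) - W(x) Q\<^sup>*)\<^sub>i\<^sub>j\<close> vanish.\<close>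

lemma weight_intertwiner_coefficients:
  fixes Q :: "complex mat"
  assumes Q: "Q \<in> carrier_mat N N" and indep: "poly_independent_on S N w"
    and intertwines: "\<forall>x \<in> S. Q * map_mat complex_of_real (weight_mat N a w x) =
      map_mat complex_of_real (weight_mat N a w x) * mat_adjoint Q"
    and ijk: "i < N" "j < N" "k < N"
  defines "A \<equiv> \<lambda>l m. complex_of_real (A_mat N a $$ (l, m))"
    and "R \<equiv> Q * map_mat complex_of_real (A_mat N a)"
  shows "Q $$ (i, k) * of_bool (j = k) = of_bool (i = k) * cnj (Q $$ (j, k))"
    and "Q $$ (i, k) * A j k + R $$ (i, k) * of_bool (j = k) =
      of_bool (i = k) * cnj (R $$ (j, k)) + A i k * cnj (Q $$ (j, k))"
proof -
  define c0 where "c0 l = Q $$ (i, l) * of_bool (j = l) - of_bool (i = l) * cnj (Q $$ (j, l))" for l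
  define c1 where "c1 l = Q $$ (i, l) * A j l + R $$ (i, l) * of_bool (j = l)
    - of_bool (i = l) * cnj (R $$ (j, l)) - A i l * cnj (Q $$ (j, l))" for l
  define c2 where "c2 l = R $$ (i, l) * A j l - A i l * cnj (R $$ (j, l))" for l
  have "(\<Sum>l<N. of_real (w l x) * (c0 l + of_real x * c1 l + of_real x ^ 2 * c2 l)) = 0"
    if "x \<in> S" for x
  proof -
    define T where "T = T_mat N a x"
    define U where "U = Q * map_mat complex_of_real T"
    have "0 = (Q * map_mat complex_of_real (weight_mat N a w x)) $$ (i, j)
        - (map_mat complex_of_real (weight_mat N a w x) * mat_adjoint Q) $$ (i, j)"
      using intertwines that by simp
    also have "\<dots> = (\<Sum>l<N. of_real (w l x) *
        (U $$ (i, l) * of_real (T $$ (j, l)) - of_real (T $$ (i, l)) * cnj (U $$ (j, l))))"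
      using congruence_intertwining_defect[OF Q T_mat_carrier ijk(1,2), of a x "\<lambda>l. w l x"]
      unfolding weight_mat_def T_def U_def by simp
    also have "\<dots> = (\<Sum>l<N. of_real (w l x) * (c0 l + of_real x * c1 l + of_real x ^ 2 * c2 l))"
      using ijk unfolding T_def U_def
      by (intro sum.cong) (simp_all add: index_mult_T_mat[OF Q] index_T_mat c0_def c1_def c2_def
          A_def R_def algebra_simps power2_eq_square)
    finally show ?thesis by simp
  qed
  then have "c0 k = 0" and "c1 k = 0"
    using poly_independent_onD_quadratic[OF indep _ \<open>k < N\<close>] by blast+
  then show "Q $$ (i, k) * of_bool (j = k) = of_bool (i = k) * cnj (Q $$ (j, k))"
    and "Q $$ (i, k) * A j k + R $$ (i, k) * of_bool (j = k) =
      of_bool (i = k) * cnj (R $$ (j, k)) + A i k * cnj (Q $$ (j, k))"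
    unfolding c0_def c1_def diff_diff_eq right_minus_eq .
qed

lemma A_mat_chain_constant:
  fixes q :: "nat \<Rightarrow> complex"
  assumes nonzero: "\<forall>k \<in> {1..N-1}. a k \<noteq> 0"
    and link: "\<And>i j. i < N \<Longrightarrow> j < N \<Longrightarrow> of_real (A_mat N a $$ (i, j)) * (q i - q j) = 0"
  shows "k < N \<Longrightarrow> q k = q 0"
proof (induction k)
  case (Suc k)
  have "a (Suc k) \<noteq> 0"
    using nonzero Suc.prems by auto
  moreover have "A_mat N a $$ (k, Suc k) = a (Suc k) \<or> A_mat N a $$ (Suc k, k) = a (Suc k)"
    using Suc.prems by (simp add: A_mat_def)
  ultimately have "q (Suc k) = q k"
    using link[of k "Suc k"] link[of "Suc k" k] Suc.prems by auto
  with Suc show ?case by simp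
qed simp

lemma weight_intertwiner_scalar:
  fixes Q :: "complex mat"
  assumes Q: "Q \<in> carrier_mat N N" and nonzero: "\<forall>k \<in> {1..N-1}. a k \<noteq> 0"
    and indep: "poly_independent_on S N w"
    and intertwines: "\<forall>x \<in> S. Q * map_mat complex_of_real (weight_mat N a w x) =
      map_mat complex_of_real (weight_mat N a w x) * mat_adjoint Q"
  shows "Q = Q $$ (0, 0) \<cdot>\<^sub>m 1\<^sub>m N"
proof -
  note coefficients = weight_intertwiner_coefficients[OF Q indep intertwines]
  have off_diagonal: "Q $$ (i, k) = 0" if "i < N" "k < N" "i \<noteq> k" for i k
    using coefficients(1)[OF that(1,2,2)] that by simp
  have real_diagonal: "cnj (Q $$ (k, k)) = Q $$ (k, k)" if "k < N" for k
    using coefficients(1)[OF that that that] by simp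
  have QA_index: "(Q * map_mat complex_of_real (A_mat N a)) $$ (i, k) =
      Q $$ (i, i) * of_real (A_mat N a $$ (i, k))" if "i < N" "k < N" for i k
    using index_mult_mat_row_diagonal[OF Q _ that] off_diagonal[OF that(1)] that by simp
  have "of_real (A_mat N a $$ (i, j)) * (Q $$ (i, i) - Q $$ (j, j)) = 0" if "i < N" "j < N" for i j
  proof (cases "i = j")
    case False
    have "Q $$ (i, j) * of_real (A_mat N a $$ (j, j)) +
        (Q * map_mat complex_of_real (A_mat N a)) $$ (i, j) * of_bool (j = j) =
        of_bool (i = j) * cnj ((Q * map_mat complex_of_real (A_mat N a)) $$ (j, j)) +
        of_real (A_mat N a $$ (i, j)) * cnj (Q $$ (j, j))"
      by (rule coefficients(2)[OF that(1,2,2)])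
    then have "Q $$ (i, i) * of_real (A_mat N a $$ (i, j)) = of_real (A_mat N a $$ (i, j)) * Q $$ (j, j)"
      unfolding QA_index[OF that] off_diagonal[OF that False] real_diagonal[OF that(2)]
        A_mat_diagonal[OF that(2)] using False by simp
    then show ?thesis
      by (simp add: right_diff_distrib mult.commute)
  qed simp
  then have "Q $$ (k, k) = Q $$ (0, 0)" if "k < N" for k
    using A_mat_chain_constant[OF nonzero, of "\<lambda>k. Q $$ (k, k)"] that by blast
  with Q off_diagonal show ?thesis
    by (intro eq_smult_one_matI) blast+
qed

lemma irreducible_weight_mat_if_poly_independent:
  assumes "\<forall>k \<in> {1..N-1}. a k \<noteq> 0" and "poly_independent_on S N w"
  shows "irreducible_weight N S (weight_mat N a w)"
  unfolding irreducible_weight_def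
proof
  assume reducible: "reducible_weight N S (weight_mat N a w)"
  obtain Q where Q: "Q \<in> carrier_mat N N"
    and intertwines: "\<forall>x \<in> S. Q * map_mat complex_of_real (weight_mat N a w x) =
      map_mat complex_of_real (weight_mat N a w x) * mat_adjoint Q"
    and "\<nexists>d. Q = d \<cdot>\<^sub>m 1\<^sub>m N"
    by (rule reducible_weight_obtain_intertwiner[OF reducible weight_mat_carrier])
  moreover have "Q = Q $$ (0, 0) \<cdot>\<^sub>m 1\<^sub>m N"
    using weight_intertwiner_scalar[OF Q assms intertwines] .
  ultimately show False
    by blast
qed

section \<open>Polynomial independence of the classical weights\<close>

lemma eventually_dominant_sum_ne_0:
  fixes E h :: "'i \<Rightarrow> 'a \<Rightarrow> real"
  assumes "finite K" and "k0 \<in> K"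
    and limits: "\<And>k. k \<in> K \<Longrightarrow> (h k \<longlongrightarrow> L k) F" and "L k0 \<noteq> 0"
    and "\<forall>\<^sub>F x in F. E k0 x \<noteq> 0"
    and dominated: "\<And>k. k \<in> K - {k0} \<Longrightarrow> ((\<lambda>x. E k x / E k0 x) \<longlongrightarrow> 0) F"
  shows "\<forall>\<^sub>F x in F. (\<Sum>k\<in>K. E k x * h k x) \<noteq> 0"
proof -
  define f where "f x = h k0 x + (\<Sum>k\<in>K - {k0}. E k x / E k0 x * h k x)" for x
  have "(f \<longlongrightarrow> L k0 + (\<Sum>k\<in>K - {k0}. 0 * L k)) F"
    unfolding f_def using \<open>k0 \<in> K\<close> by (intro tendsto_intros limits dominated) auto
  then have "\<forall>\<^sub>F x in F. f x \<noteq> 0"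
    using \<open>L k0 \<noteq> 0\<close> by (intro tendsto_imp_eventually_ne) simp_all
  with \<open>\<forall>\<^sub>F x in F. E k0 x \<noteq> 0\<close> show ?thesis
  proof eventually_elim
    case (elim x)
    have "(\<Sum>k\<in>K. E k x * h k x) = E k0 x * f x"
      using elim by (simp add: f_def sum.remove[OF assms(1,2)] distrib_left sum_distrib_left)
    with elim show ?case by simp
  qed
qed

lemma obtain_strict_arg_min_on:
  fixes f :: "'a \<Rightarrow> 'b :: linorder"
  assumes "finite K" and "K \<noteq> {}" and "inj_on f K"
  obtains k0 where "k0 \<in> K" and "\<And>k. k \<in> K - {k0} \<Longrightarrow> f k0 < f k"
proof
  show "arg_min_on f K \<in> K"
    using arg_min_if_finite(1)[OF assms(1,2)] .
  show "f (arg_min_on f K) < f k" if "k \<in> K - {arg_min_on f K}" for k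
    using arg_min_least[OF assms(1,2), of k f] inj_on_eq_iff[OF assms(3) \<open>arg_min_on f K \<in> K\<close>, of k]
      that by auto
qed

lemma powr_quotient_tendsto_0_at_right:
  fixes a b :: real
  assumes "a < b"
  shows "((\<lambda>x. x powr b / x powr a) \<longlongrightarrow> 0) (at_right 0)"
proof -
  have "((\<lambda>x. x powr (b - a)) \<longlongrightarrow> 0) (at_right 0)"
    using assms by real_asymp
  moreover have "\<forall>\<^sub>F x in at_right 0. x powr (b - a) = x powr b / x powr a"
    using eventually_at_right_less[of 0] by eventually_elim (simp add: powr_diff)
  ultimately show ?thesis
    by (rule Lim_transform_eventually)
qed

lemma exp_power_quotient_tendsto_0_at_top:
  fixes a b :: real
  assumes "a < b"
  shows "((\<lambda>x. exp (a * x) * x ^ m / (exp (b * x) * x ^ n)) \<longlongrightarrow> 0) at_top"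
proof -
  have "((\<lambda>x. exp ((a - b) * x) * x ^ m / x ^ n) \<longlongrightarrow> 0) at_top"
    using assms by real_asymp
  moreover have "\<forall>\<^sub>F x in at_top. exp ((a - b) * x) * x ^ m / x ^ n = exp (a * x) * x ^ m / (exp (b * x) * x ^ n)"
    by (simp add: algebra_simps exp_diff)
  ultimately show ?thesis
    by (rule Lim_transform_eventually)
qed

lemma inj_on_add_of_nat_if_noninteger_diff:
  fixes \<alpha> :: "'a \<Rightarrow> real" and m :: "'a \<Rightarrow> nat"
  assumes "\<And>i j. i \<in> K \<Longrightarrow> j \<in> K \<Longrightarrow> i \<noteq> j \<Longrightarrow> \<alpha> i - \<alpha> j \<notin> \<int>"
  shows "inj_on (\<lambda>k. \<alpha> k + real (m k)) K"
proof
  fix i j assume "i \<in> K" "j \<in> K" "\<alpha> i + real (m i) = \<alpha> j + real (m j)"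
  then have "\<alpha> i - \<alpha> j = of_int (int (m j) - int (m i))"
    by simp
  with assms[OF \<open>i \<in> K\<close> \<open>j \<in> K\<close>] show "i = j"
    by (metis Ints_of_int)
qed

lemma powr_poly_independent_at_right_0:
  fixes \<alpha> G :: "nat \<Rightarrow> real" and g :: "nat \<Rightarrow> real \<Rightarrow> real" and p :: "nat \<Rightarrow> real poly"
  assumes noninteger: "\<And>i j. i < N \<Longrightarrow> j < N \<Longrightarrow> i \<noteq> j \<Longrightarrow> \<alpha> i - \<alpha> j \<notin> \<int>"
    and g: "\<And>k. k < N \<Longrightarrow> (g k \<longlongrightarrow> G k) (at_right 0)" and G: "\<And>k. k < N \<Longrightarrow> G k \<noteq> 0"
    and zero: "\<forall>\<^sub>F x in at_right 0. (\<Sum>k<N. x powr \<alpha> k * g k x * poly (p k) x) = 0"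
    and "k < N"
  shows "p k = 0"
proof (rule ccontr)
  assume "p k \<noteq> 0"
  define K where "K = {k. k < N \<and> p k \<noteq> 0}"
  have "finite K" and "K \<noteq> {}"
    unfolding K_def using \<open>k < N\<close> \<open>p k \<noteq> 0\<close> by auto
  define m where "m k = order 0 (p k)" for k
  have "\<exists>q. p k = [:0, 1:] ^ m k * q \<and> poly q 0 \<noteq> 0" if "k \<in> K" for k
    using order_decomp[of "p k" 0] poly_eq_0_iff_dvd[of _ 0] that unfolding K_def m_def by auto
  then obtain q where q: "\<And>k. k \<in> K \<Longrightarrow> p k = [:0, 1:] ^ m k * q k \<and> poly (q k) 0 \<noteq> 0"
    by metis
  define key where "key k = \<alpha> k + real (m k)" for k
  have "inj_on key K"
    unfolding key_def using noninteger by (intro inj_on_add_of_nat_if_noninteger_diff) (auto simp: K_def)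
  then obtain k0 where k0: "k0 \<in> K" and key_less: "\<And>k. k \<in> K - {k0} \<Longrightarrow> key k0 < key k"
    using obtain_strict_arg_min_on[OF \<open>finite K\<close> \<open>K \<noteq> {}\<close>] by blast
  have "\<forall>\<^sub>F x in at_right 0. (\<Sum>k\<in>K. x powr key k * (g k x * poly (q k) x)) \<noteq> 0"
  proof (rule eventually_dominant_sum_ne_0[OF \<open>finite K\<close> k0])
    show "((\<lambda>x. g k x * poly (q k) x) \<longlongrightarrow> G k * poly (q k) 0) (at_right 0)" if "k \<in> K" for k
      using that g[of k] unfolding K_def by (auto intro!: tendsto_intros)
    show "G k0 * poly (q k0) 0 \<noteq> 0"
      using G[of k0] q[OF k0] k0 by (simp add: K_def)
    show "\<forall>\<^sub>F x in at_right 0. x powr key k0 \<noteq> 0"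
      using eventually_at_right_less[of 0] by eventually_elim simp
    show "((\<lambda>x. x powr key k / x powr key k0) \<longlongrightarrow> 0) (at_right 0)" if "k \<in> K - {k0}" for k
      using powr_quotient_tendsto_0_at_right[OF key_less[OF that]] .
  qed
  moreover have "\<forall>\<^sub>F x in at_right 0. (\<Sum>k\<in>K. x powr key k * (g k x * poly (q k) x)) = 0"
    using zero eventually_at_right_less[of 0]
  proof eventually_elim
    case (elim x)
    have "(\<Sum>k\<in>K. x powr key k * (g k x * poly (q k) x)) = (\<Sum>k\<in>K. x powr \<alpha> k * g k x * poly (p k) x)"
      using q elim by (intro sum.cong) (simp_all add: key_def powr_add powr_realpow poly_power)
    also have "\<dots> = (\<Sum>k<N. x powr \<alpha> k * g k x * poly (p k) x)"
      by (rule sum.mono_neutral_left) (auto simp: K_def)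
    finally show ?case
      using elim by simp
  qed
  ultimately have "\<forall>\<^sub>F x in at_right (0 :: real). False"
    by eventually_elim simp
  then show False
    by simp
qed

lemma laguerre_poly_independent:
  assumes "\<And>i j. i < N \<Longrightarrow> j < N \<Longrightarrow> i \<noteq> j \<Longrightarrow> \<alpha> i - \<alpha> j \<notin> \<int>"
  shows "poly_independent_on {0<..} N (\<lambda>k. laguerre_w (\<alpha> k))"
proof (rule poly_independent_onI)
  fix p k assume zero: "\<forall>x \<in> {0<..}. (\<Sum>k<N. laguerre_w (\<alpha> k) x * poly (p k) x) = 0" and "k < N"
  show "p k = 0"
  proof (rule powr_poly_independent_at_right_0[OF assms, where g = "\<lambda>_ x. exp (- x)" and G = "\<lambda>_. 1"])
    show "((\<lambda>x. exp (- x)) \<longlongrightarrow> 1) (at_right (0 :: real))"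
      by (auto intro!: tendsto_eq_intros)
    show "\<forall>\<^sub>F x in at_right 0. (\<Sum>k<N. x powr \<alpha> k * exp (- x) * poly (p k) x) = 0"
      using eventually_at_right_less[of 0]
      by eventually_elim (use zero in \<open>simp add: laguerre_w_def mult_ac\<close>)
  qed (simp_all add: \<open>k < N\<close>)
qed

text \<open>The substitution \<open>x = 1 - t\<close> moves the endpoint \<open>1\<close> to \<open>0\<close> and turns the \<open>k\<close>-th Jacobi
  weight into \<open>t powr \<alpha> k * (2 - t) powr \<beta> k\<close>.\<close>

lemma jacobi_poly_independent:
  assumes "\<And>i j. i < N \<Longrightarrow> j < N \<Longrightarrow> i \<noteq> j \<Longrightarrow> \<alpha> i - \<alpha> j \<notin> \<int>"
  shows "poly_independent_on {-1<..<1} N (\<lambda>k. jacobi_w (\<alpha> k) (\<beta> k))"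
proof (rule poly_independent_onI)
  fix p k assume zero: "\<forall>x \<in> {-1<..<1}. (\<Sum>k<N. jacobi_w (\<alpha> k) (\<beta> k) x * poly (p k) x) = 0"
    and "k < N"
  have near_0: "\<forall>\<^sub>F t in at_right 0. t \<in> {0<..<(1 :: real)}"
    by (rule eventually_at_right_real) simp
  have "pcompose (p k) [:1, -1:] = 0"
  proof (rule powr_poly_independent_at_right_0[OF assms,
        where g = "\<lambda>k t. (2 - t) powr \<beta> k" and G = "\<lambda>k. 2 powr \<beta> k"])
    show "((\<lambda>t. (2 - t) powr \<beta> j) \<longlongrightarrow> 2 powr \<beta> j) (at_right 0)" for j
      by (rule tendsto_eq_intros) (auto intro!: tendsto_eq_intros)
    show "\<forall>\<^sub>F t in at_right 0.
        (\<Sum>k<N. t powr \<alpha> k * (2 - t) powr \<beta> k * poly (pcompose (p k) [:1, -1:]) t) = 0"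
      using near_0
    proof eventually_elim
      case (elim t)
      then have "1 - t \<in> {-1<..<1}" by simp
      from zero[rule_format, OF this] show ?case
        by (simp add: jacobi_w_def poly_pcompose)
    qed
  qed (simp_all add: \<open>k < N\<close>)
  then show "p k = 0"
    by (rule pcompose_eq_0) simp
qed

lemma hermite_poly_independent:
  assumes distinct: "\<And>i j. i < N \<Longrightarrow> j < N \<Longrightarrow> i \<noteq> j \<Longrightarrow> b i \<noteq> b j"
  shows "poly_independent_on UNIV N (\<lambda>k. hermite_w (b k))"
proof (rule poly_independent_onI)
  fix p k assume zero: "\<forall>x \<in> UNIV. (\<Sum>k<N. hermite_w (b k) x * poly (p k) x) = 0" and "k < N"
  show "p k = 0"
  proof (rule ccontr)
    assume "p k \<noteq> 0"
    define K where "K = {k. k < N \<and> p k \<noteq> 0}"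
    have "finite K" and "K \<noteq> {}"
      unfolding K_def using \<open>k < N\<close> \<open>p k \<noteq> 0\<close> by auto
    have "inj_on (\<lambda>k. - b k) K"
      by (rule inj_onI) (use distinct in \<open>auto simp: K_def\<close>)
    then obtain k0 where k0: "k0 \<in> K" and b_less: "\<And>k. k \<in> K - {k0} \<Longrightarrow> b k < b k0"
      using obtain_strict_arg_min_on[OF \<open>finite K\<close> \<open>K \<noteq> {}\<close>] by (metis neg_less_iff_less)
    define d where "d k = degree (p k)" for k
    have "\<forall>\<^sub>F x in at_top. (\<Sum>k\<in>K. (exp (2 * b k * x) * x ^ d k) * (poly (p k) x / x ^ d k)) \<noteq> 0"
    proof (rule eventually_dominant_sum_ne_0[OF \<open>finite K\<close> k0])
      show "((\<lambda>x. poly (p k) x / x ^ d k) \<longlongrightarrow> lead_coeff (p k)) at_top" for k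
        unfolding d_def by (rule tendsto_mono[OF at_top_le_at_infinity poly_divide_tendsto_aux])
      show "lead_coeff (p k0) \<noteq> 0"
        using k0 unfolding K_def by simp
      show "\<forall>\<^sub>F x in at_top. exp (2 * b k0 * x) * x ^ d k0 \<noteq> 0"
        using eventually_gt_at_top[of 0] by eventually_elim simp
      show "((\<lambda>x. exp (2 * b k * x) * x ^ d k / (exp (2 * b k0 * x) * x ^ d k0)) \<longlongrightarrow> 0) at_top"
        if "k \<in> K - {k0}" for k
        using b_less[OF that] by (intro exp_power_quotient_tendsto_0_at_top) simp
    qed
    moreover have "\<forall>\<^sub>F x in at_top. (\<Sum>k\<in>K. (exp (2 * b k * x) * x ^ d k) * (poly (p k) x / x ^ d k)) = 0"
      using eventually_gt_at_top[of 0]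
    proof eventually_elim
      case (elim x)
      have "exp (- (x * x)) * (\<Sum>k\<in>K. (exp (2 * b k * x) * x ^ d k) * (poly (p k) x / x ^ d k)) =
          (\<Sum>k\<in>K. hermite_w (b k) x * poly (p k) x)"
        unfolding sum_distrib_left using elim
        by (intro sum.cong) (simp_all add: hermite_w_def exp_add[symmetric])
      also have "\<dots> = (\<Sum>k<N. hermite_w (b k) x * poly (p k) x)"
        by (rule sum.mono_neutral_left) (auto simp: K_def)
      finally show ?case
        using zero by simp
    qed
    ultimately have "\<forall>\<^sub>F x in at_top :: real filter. False"
      by eventually_elim simp
    then show False
      by simp
  qed
qed

lemma jacobi_alpha_noninteger:
  fixes \<alpha> \<beta> :: "nat \<Rightarrow> real"
  assumes noninteger: "\<forall>i<N. \<forall>j<N. i \<noteq> j \<longrightarrow> \<alpha> i - \<alpha> j \<notin> \<int> \<or> \<beta> i - \<beta> j \<notin> \<int>"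
    and sums: "\<forall>j<N. \<alpha> 0 + \<beta> 0 = \<alpha> j + \<beta> j + 1 + (-1) ^ (j + 1)"
    and "i < N" "j < N" "i \<noteq> j"
  shows "\<alpha> i - \<alpha> j \<notin> \<int>"
proof
  assume "\<alpha> i - \<alpha> j \<in> \<int>"
  have "\<alpha> 0 + \<beta> 0 = \<alpha> i + \<beta> i + 1 + (-1) ^ (i + 1)"
    and "\<alpha> 0 + \<beta> 0 = \<alpha> j + \<beta> j + 1 + (-1) ^ (j + 1)"
    using sums \<open>i < N\<close> \<open>j < N\<close> by blast+
  then have "\<beta> i - \<beta> j = ((-1) ^ (j + 1) - (-1) ^ (i + 1)) - (\<alpha> i - \<alpha> j)"
    by linarith
  also have "\<dots> \<in> \<int>"
    by (intro Ints_diff[OF _ \<open>\<alpha> i - \<alpha> j \<in> \<int>\<close>] Ints_diff Ints_power Ints_minus Ints_1)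
  finally show False
    using noninteger \<open>\<alpha> i - \<alpha> j \<in> \<int>\<close> assms(3-5) by blast
qed

theorem proposition3p7:
  fixes N :: nat and a :: "nat \<Rightarrow> real"
    and b :: "nat \<Rightarrow> real" and \<alpha>L :: "nat \<Rightarrow> real"
    and \<alpha> \<beta> :: "nat \<Rightarrow> real"
  assumes "N \<ge> 2"
    and "\<forall>k \<in> {1..N-1}. a k \<noteq> 0"
  shows
   "((\<forall>i<N. \<forall>j<N. i \<noteq> j \<longrightarrow> b i \<noteq> b j) \<longrightarrow>
       irreducible_weight N UNIV (weight_mat N a (\<lambda>i. hermite_w (b i)))) \<and>
    ((\<forall>i<N. \<alpha>L i > -1) \<and> (\<forall>i<N. \<forall>j<N. i \<noteq> j \<longrightarrow> \<alpha>L i - \<alpha>L j \<notin> \<int>) \<longrightarrow>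
       irreducible_weight N {0<..} (weight_mat N a (\<lambda>i. laguerre_w (\<alpha>L i)))) \<and>
    ((\<forall>i<N. \<alpha> i > -1 \<and> \<beta> i > -1) \<and>
     (\<forall>i<N. \<forall>j<N. i \<noteq> j \<longrightarrow> \<alpha> i - \<alpha> j \<notin> \<int> \<or> \<beta> i - \<beta> j \<notin> \<int>) \<and>
     (\<forall>j<N. \<alpha> 0 + \<beta> 0 = \<alpha> j + \<beta> j + 1 + (-1) ^ (j + 1)) \<longrightarrow>
       irreducible_weight N {-1<..<1} (weight_mat N a (\<lambda>i. jacobi_w (\<alpha> i) (\<beta> i))))"
proof (intro conjI impI)
  assume "\<forall>i<N. \<forall>j<N. i \<noteq> j \<longrightarrow> b i \<noteq> b j"
  then show "irreducible_weight N UNIV (weight_mat N a (\<lambda>i. hermite_w (b i)))"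
    by (intro irreducible_weight_mat_if_poly_independent[OF assms(2)] hermite_poly_independent) blast
next
  assume "(\<forall>i<N. \<alpha>L i > -1) \<and> (\<forall>i<N. \<forall>j<N. i \<noteq> j \<longrightarrow> \<alpha>L i - \<alpha>L j \<notin> \<int>)"
  then show "irreducible_weight N {0<..} (weight_mat N a (\<lambda>i. laguerre_w (\<alpha>L i)))"
    by (intro irreducible_weight_mat_if_poly_independent[OF assms(2)] laguerre_poly_independent) blast
next
  assume "(\<forall>i<N. \<alpha> i > -1 \<and> \<beta> i > -1) \<and>
    (\<forall>i<N. \<forall>j<N. i \<noteq> j \<longrightarrow> \<alpha> i - \<alpha> j \<notin> \<int> \<or> \<beta> i - \<beta> j \<notin> \<int>) \<and>
    (\<forall>j<N. \<alpha> 0 + \<beta> 0 = \<alpha> j + \<beta> j + 1 + (-1) ^ (j + 1))"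
  then have "\<alpha> i - \<alpha> j \<notin> \<int>" if "i < N" "j < N" "i \<noteq> j" for i j
    using jacobi_alpha_noninteger[of N \<alpha> \<beta> i j] that by blast
  then show "irreducible_weight N {-1<..<1} (weight_mat N a (\<lambda>i. jacobi_w (\<alpha> i) (\<beta> i)))"
    by (intro irreducible_weight_mat_if_poly_independent[OF assms(2)] jacobi_poly_independent)
qed

end
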